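(* Let $n\ge2$ and $i,j\in\{0,\dots,n-1\}$. If $w\in W(\mathrm{C}_n)$ satisfies $w\beta_i=\beta_j$, then $we_iw^{-1}=e_j$ in $\mathrm{Br}(\mathrm{C}_n)$.
   Context: Let $R$ be a commutative ring with an invertible element $\delta$, and $n\ge1$. The Brauer algebra of type $\mathrm{C}_n$, $\mathrm{Br}(\mathrm{C}_n,R,\delta)$, is the unital associative $R$-algebra generated by $r_0,\dots,r_{n-1},e_0,\dots,e_{n-1}$ subject to the following relations, where for distinct $i,j\in\{0,\dots,n-1\}$ we write $i\sim j$ if $|i-j|=1$ and $i\nsim j$ otherwise: $r_i^2=1$ and $r_ie_i=e_ir_i=e_i$ for all $i$; $e_i^2=\delta^2e_i$ for $i>0$; $e_0^2=\delta e_0$; $r_ir_j=r_jr_i$, $e_ir_j=r_je_i$, $e_ie_j=e_je_i$ for $i\nsim j$; $r_ir_jr_i=r_jr_ir_j$, $r_jr_ie_j=e_ie_j$, $r_ie_jr_i=r_je_ir_j$ for $i\sim j$ with $i,j>0$; and $r_1r_0r_1r_0=r_0r_1r_0r_1$, $r_1r_0e_1=r_0e_1$, $r_1e_0r_1e_0=e_0e_1e_0$, $r_1r_0r_1e_0=e_0r_1r_0r_1$, $e_1r_0e_1=\delta e_1$, $e_1e_0e_1=\delta e_1$, $e_1r_0r_1=e_1r_0$, $e_1e_0r_1=e_1e_0$. Write $\mathrm{Br}(\mathrm{C}_n)=\mathrm{Br}(\mathrm{C}_n,\mathbb{Z}[\delta^{\pm1}],\delta)$. $W(\mathrm{C}_n)$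 is the subgroup of the multiplicative monoid of $\mathrm{Br}(\mathrm{C}_n)$ generated by $r_0,\dots,r_{n-1}$; it is isomorphic to the Weyl group of type $\mathrm{C}_n$ via $r_i\mapsto s_{\beta_i}$, where, with $f_1,\dots,f_n$ the standard basis of $\mathbb{R}^n$, $\beta_0=2f_1$ (long simple root) and $\beta_i=f_{i+1}-f_i$ for $1\le i\le n-1$ (short simple roots), and $s_\beta(x)=x-\frac{2(x,\beta)}{(\beta,\beta)}\beta$. Through this isomorphism $W(\mathrm{C}_n)$ acts on $\mathbb{R}^n$. *)

theory Defs
  imports Complex_Main
begin

datatype gen = R nat | E nat

definition valid_gen :: "nat \<Rightarrow> gen \<Rightarrow> bool" where
  "valid_gen n g = (case g of R i \<Rightarrow> i < n | E i \<Rightarrow> i < n)"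

text \<open>Elements of the free Z[delta^(+-1)]-algebra on the generators are represented as
  Z-valued coefficient functions on monomials (k, w), standing for delta^k * w,
  with k an integer exponent and w a word in the generators.\<close>

type_synonym elt = "int \<times> gen list \<Rightarrow> int"

definition mono :: "int \<Rightarrow> gen list \<Rightarrow> elt" where
  "mono k w = (\<lambda>x. if x = (k, w) then 1 else 0)"

text \<open>Left / right multiplication by the monomial delta^k * u.\<close>
definition lmul :: "int \<Rightarrow> gen list \<Rightarrow> elt \<Rightarrow> elt" where
  "lmul k u f = (\<lambda>(m, w). if take (length u) w = u then f (m - k, drop (length u) w) else 0)"

definition rmul :: "int \<Rightarrow> gen list \<Rightarrow> elt \<Rightarrow> elt" where
  "rmul k u f = (\<lambda>(m, w). if length u \<le> length w \<and> drop (length w - length u) w = u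
                           then f (m - k, take (length w - length u) w) else 0)"

definition adj :: "nat \<Rightarrow> nat \<Rightarrow> bool" where
  "adj i j \<longleftrightarrow> i = j + 1 \<or> j = i + 1"

text \<open>Defining relations: a pair ((u,k),(v,l)) means delta^k u = delta^l v.\<close>
inductive_set BrRels :: "nat \<Rightarrow> ((gen list \<times> int) \<times> (gen list \<times> int)) set" for n :: nat where
  r_sq: "i < n \<Longrightarrow> (([R i, R i], 0), ([], 0)) \<in> BrRels n"
| re: "i < n \<Longrightarrow> (([R i, E i], 0), ([E i], 0)) \<in> BrRels n"
| er: "i < n \<Longrightarrow> (([E i, R i], 0), ([E i], 0)) \<in> BrRels n"
| e_sq: "0 < i \<Longrightarrow> i < n \<Longrightarrow> (([E i, E i], 0), ([E i], 2)) \<in> BrRels n"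
| e0_sq: "0 < n \<Longrightarrow> (([E 0, E 0], 0), ([E 0], 1)) \<in> BrRels n"
| comm_rr: "i < n \<Longrightarrow> j < n \<Longrightarrow> i \<noteq> j \<Longrightarrow> \<not> adj i j \<Longrightarrow> (([R i, R j], 0), ([R j, R i], 0)) \<in> BrRels n"
| comm_er: "i < n \<Longrightarrow> j < n \<Longrightarrow> i \<noteq> j \<Longrightarrow> \<not> adj i j \<Longrightarrow> (([E i, R j], 0), ([R j, E i], 0)) \<in> BrRels n"
| comm_ee: "i < n \<Longrightarrow> j < n \<Longrightarrow> i \<noteq> j \<Longrightarrow> \<not> adj i j \<Longrightarrow> (([E i, E j], 0), ([E j, E i], 0)) \<in> BrRels n"
| braid_rrr: "i < n \<Longrightarrow> j < n \<Longrightarrow> adj i j \<Longrightarrow> 0 < i \<Longrightarrow> 0 < j \<Longrightarrow>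
     (([R i, R j, R i], 0), ([R j, R i, R j], 0)) \<in> BrRels n"
| braid_rre: "i < n \<Longrightarrow> j < n \<Longrightarrow> adj i j \<Longrightarrow> 0 < i \<Longrightarrow> 0 < j \<Longrightarrow>
     (([R j, R i, E j], 0), ([E i, E j], 0)) \<in> BrRels n"
| braid_rer: "i < n \<Longrightarrow> j < n \<Longrightarrow> adj i j \<Longrightarrow> 0 < i \<Longrightarrow> 0 < j \<Longrightarrow>
     (([R i, E j, R i], 0), ([R j, E i, R j], 0)) \<in> BrRels n"
| c1: "1 < n \<Longrightarrow> (([R 1, R 0, R 1, R 0], 0), ([R 0, R 1, R 0, R 1], 0)) \<in> BrRels n"
| c2: "1 < n \<Longrightarrow> (([R 1, R 0, E 1], 0), ([R 0, E 1], 0)) \<in> BrRels n"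
| c3: "1 < n \<Longrightarrow> (([R 1, E 0, R 1, E 0], 0), ([E 0, E 1, E 0], 0)) \<in> BrRels n"
| c4: "1 < n \<Longrightarrow> (([R 1, R 0, R 1, E 0], 0), ([E 0, R 1, R 0, R 1], 0)) \<in> BrRels n"
| c5: "1 < n \<Longrightarrow> (([E 1, R 0, E 1], 0), ([E 1], 1)) \<in> BrRels n"
| c6: "1 < n \<Longrightarrow> (([E 1, E 0, E 1], 0), ([E 1], 1)) \<in> BrRels n"
| c7: "1 < n \<Longrightarrow> (([E 1, R 0, R 1], 0), ([E 1, R 0], 0)) \<in> BrRels n"
| c8: "1 < n \<Longrightarrow> (([E 1, E 0, R 1], 0), ([E 1, E 0], 0)) \<in> BrRels n"

inductive_set BrIdeal :: "nat \<Rightarrow> elt set" for n :: nat where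
  rel: "((u, k), (v, l)) \<in> BrRels n \<Longrightarrow> (\<lambda>x. mono k u x - mono l v x) \<in> BrIdeal n"
| zero: "(\<lambda>_. 0) \<in> BrIdeal n"
| add: "a \<in> BrIdeal n \<Longrightarrow> b \<in> BrIdeal n \<Longrightarrow> (\<lambda>x. a x + b x) \<in> BrIdeal n"
| neg: "a \<in> BrIdeal n \<Longrightarrow> (\<lambda>x. - a x) \<in> BrIdeal n"
| lmul: "a \<in> BrIdeal n \<Longrightarrow> list_all (valid_gen n) u \<Longrightarrow> lmul k u a \<in> BrIdeal n"
| rmul: "a \<in> BrIdeal n \<Longrightarrow> list_all (valid_gen n) u \<Longrightarrow> rmul k u a \<in> BrIdeal n"

definition br_eq :: "nat \<Rightarrow> elt \<Rightarrow> elt \<Rightarrow> bool" where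
  "br_eq n a b \<longleftrightarrow> (\<lambda>x. a x - b x) \<in> BrIdeal n"

text \<open>Vectors of R^n are functions nat => real with coordinates 1..n (f_k = unit vector at k).\<close>
definition inner_n :: "nat \<Rightarrow> (nat \<Rightarrow> real) \<Rightarrow> (nat \<Rightarrow> real) \<Rightarrow> real" where
  "inner_n n x y = (\<Sum>k = 1..n. x k * y k)"

definition beta :: "nat \<Rightarrow> nat \<Rightarrow> real" where
  "beta i = (if i = 0 then (\<lambda>k. if k = 1 then 2 else 0)
             else (\<lambda>k. if k = i + 1 then 1 else if k = i then -1 else 0))"

definition refl_vec :: "nat \<Rightarrow> (nat \<Rightarrow> real) \<Rightarrow> (nat \<Rightarrow> real) \<Rightarrow> (nat \<Rightarrow> real)" where
  "refl_vec n b x = (\<lambda>k. x k - (2 * inner_n n x b / inner_n n b b) * b k)"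

text \<open>Action of the Weyl group element r_{a1} ... r_{am} given as the word [a1,...,am].\<close>
definition word_act :: "nat \<Rightarrow> nat list \<Rightarrow> (nat \<Rightarrow> real) \<Rightarrow> (nat \<Rightarrow> real)" where
  "word_act n ws x = foldr (\<lambda>a. refl_vec n (beta a)) ws x"

end

theory Submission
  imports Defs
begin

text \<open>
  The positive roots of type C_n are the long roots 2 f_a (1 \<le> a \<le> n)
  and the short roots f_b - f_a and f_a + f_b (1 \<le> a < b \<le> n).  To every positive
  root r we attach an explicit word  root_word r  in the generators, obtained from
  e_0 or e_a by successive conjugation with the r_k; e.g. the root word of
  beta_i is the single letter e_i.  The heart of the proof is the equivariance
  lemma: for every generator r_k, the conjugate  r_k (root_word r) r_k  equals
  root_word (s_k r) in Br(C_n), where s_k r is the positive root among +-s_{beta_k} r.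
  It is checked case by case from the defining relations.  On the side of R^n,
  s_{beta_k} maps the root vector of r to +- the root vector of s_k r.  Induction on
  the word w then shows that w e_i w^-1 equals root_word r where w beta_i = +- r;
  if w beta_i = beta_j, then r is the root of beta_j, whose root word is e_j.
\<close>

section \<open>Equality in Br(C_n) on words\<close>

abbreviation valid_word :: "nat \<Rightarrow> gen list \<Rightarrow> bool" where
  "valid_word n \<equiv> list_all (valid_gen n)"

lemma br_eq_refl: "br_eq n a a"
proof -
  have "(\<lambda>x. a x - a x) = (\<lambda>_. 0)" by simp
  thus ?thesis unfolding br_eq_def using BrIdeal.zero by metis
qed

lemma br_eq_sym: "br_eq n a b \<Longrightarrow> br_eq n b a"
proof -
  assume "br_eq n a b"
  hence "(\<lambda>x. - (a x - b x)) \<in> BrIdeal n" unfolding br_eq_def by (rule BrIdeal.neg)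
  moreover have "(\<lambda>x. - (a x - b x)) = (\<lambda>x. b x - a x)" by auto
  ultimately show ?thesis unfolding br_eq_def by simp
qed

lemma br_eq_trans: "br_eq n a b \<Longrightarrow> br_eq n b c \<Longrightarrow> br_eq n a c"
proof -
  assume "br_eq n a b" "br_eq n b c"
  hence "(\<lambda>x. (a x - b x) + (b x - c x)) \<in> BrIdeal n" unfolding br_eq_def by (rule BrIdeal.add)
  moreover have "(\<lambda>x. (a x - b x) + (b x - c x)) = (\<lambda>x. a x - c x)" by auto
  ultimately show ?thesis unfolding br_eq_def by simp
qed

lemma lmul_mono_diff:
  "lmul 0 x (\<lambda>z. mono 0 u z - mono 0 v z) = (\<lambda>z. mono 0 (x @ u) z - mono 0 (x @ v) z)"
proof (rule ext, clarify)
  fix m :: int and w :: "gen list"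
  have split: "\<And>u. (w = x @ u) \<longleftrightarrow> (take (length x) w = x \<and> drop (length x) w = u)"
    by (metis append_eq_conv_conj)
  show "lmul 0 x (\<lambda>z. mono 0 u z - mono 0 v z) (m, w) = mono 0 (x @ u) (m, w) - mono 0 (x @ v) (m, w)"
    unfolding lmul_def mono_def using split[of u] split[of v] by auto
qed

lemma rmul_mono_diff:
  "rmul 0 y (\<lambda>z. mono 0 u z - mono 0 v z) = (\<lambda>z. mono 0 (u @ y) z - mono 0 (v @ y) z)"
proof (rule ext, clarify)
  fix m :: int and w :: "gen list"
  have split: "\<And>u. (w = u @ y) \<longleftrightarrow> (length y \<le> length w \<and> drop (length w - length y) w = y
                                      \<and> take (length w - length y) w = u)"
  proof
    fix u assume "w = u @ y"
    then show "length y \<le> length w \<and> drop (length w - length y) w = y \<and> take (length w - length y) w = u"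
      by simp
  next
    fix u assume "length y \<le> length w \<and> drop (length w - length y) w = y \<and> take (length w - length y) w = u"
    then show "w = u @ y" by (metis append_take_drop_id)
  qed
  show "rmul 0 y (\<lambda>z. mono 0 u z - mono 0 v z) (m, w) = mono 0 (u @ y) (m, w) - mono 0 (v @ y) (m, w)"
    unfolding rmul_def mono_def using split[of u] split[of v] by auto
qed

lemma br_eq_context:
  assumes "br_eq n (mono 0 u) (mono 0 v)" and "valid_word n x" and "valid_word n y"
  shows "br_eq n (mono 0 (x @ u @ y)) (mono 0 (x @ v @ y))"
proof -
  have "lmul 0 x (\<lambda>z. mono 0 u z - mono 0 v z) \<in> BrIdeal n"
    using assms unfolding br_eq_def by (intro BrIdeal.lmul)
  hence "(\<lambda>z. mono 0 (x @ u) z - mono 0 (x @ v) z) \<in> BrIdeal n" by (simp add: lmul_mono_diff)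
  hence "rmul 0 y (\<lambda>z. mono 0 (x @ u) z - mono 0 (x @ v) z) \<in> BrIdeal n"
    using assms by (intro BrIdeal.rmul)
  thus ?thesis unfolding br_eq_def by (simp add: rmul_mono_diff)
qed

text \<open>Equality of valid words in Br(C_n); keeping validity in the relation lets
  the context rule be applied without side conditions on the rewritten words.\<close>

definition word_eq :: "nat \<Rightarrow> gen list \<Rightarrow> gen list \<Rightarrow> bool" where
  "word_eq n u v \<longleftrightarrow> br_eq n (mono 0 u) (mono 0 v) \<and> valid_word n u \<and> valid_word n v"

lemma word_eq_refl: "valid_word n u \<Longrightarrow> word_eq n u u"
  unfolding word_eq_def by (simp add: br_eq_refl)

lemma word_eq_sym: "word_eq n u v \<Longrightarrow> word_eq n v u"
  unfolding word_eq_def by (simp add: br_eq_sym)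

lemma word_eq_trans [trans]: "word_eq n u v \<Longrightarrow> word_eq n v w \<Longrightarrow> word_eq n u w"
  unfolding word_eq_def by (blast intro: br_eq_trans)

lemma word_eq_context:
  "word_eq n u v \<Longrightarrow> valid_word n x \<Longrightarrow> valid_word n y \<Longrightarrow> A = x @ u @ y \<Longrightarrow> B = x @ v @ y
   \<Longrightarrow> word_eq n A B"
  unfolding word_eq_def by (auto intro: br_eq_context)

lemma word_eq_rel:
  "((u, 0), (v, 0)) \<in> BrRels n \<Longrightarrow> valid_word n u \<Longrightarrow> valid_word n v \<Longrightarrow> word_eq n u v"
  unfolding word_eq_def br_eq_def by (auto intro: BrIdeal.rel)

lemma word_eq_valid: "word_eq n u v \<Longrightarrow> valid_word n u"
  unfolding word_eq_def by simp

section \<open>Conjugation by a reflection generator\<close>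

text \<open>The word r_k X r_k; since r_k^2 = 1 this is conjugation of X by r_k.\<close>

definition rconj :: "nat \<Rightarrow> gen list \<Rightarrow> gen list" where
  "rconj k X = R k # X @ [R k]"

lemma valid_rconj [simp]: "valid_word n (rconj k X) \<longleftrightarrow> k < n \<and> valid_word n X"
  unfolding rconj_def by (auto simp: valid_gen_def)

lemma rconj_cong: "word_eq n X Y \<Longrightarrow> k < n \<Longrightarrow> word_eq n (rconj k X) (rconj k Y)"
  by (rule word_eq_context[of n X Y "[R k]" "[R k]"]) (auto simp: rconj_def valid_gen_def)

lemma r_square: "k < n \<Longrightarrow> word_eq n [R k, R k] []"
  by (rule word_eq_rel) (auto intro: BrRels.intros simp: valid_gen_def)

lemma rconj_involutive: "valid_word n X \<Longrightarrow> k < n \<Longrightarrow> word_eq n (rconj k (rconj k X)) X"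
proof -
  assume a: "valid_word n X" "k < n"
  have "word_eq n (rconj k (rconj k X)) (X @ [R k, R k])"
    by (rule word_eq_context[OF r_square[OF a(2)], of "[]" "X @ [R k, R k]"])
      (use a in \<open>auto simp: rconj_def valid_gen_def\<close>)
  also have "word_eq n \<dots> X"
    by (rule word_eq_context[OF r_square[OF a(2)], of X "[]"]) (auto simp: a)
  finally show ?thesis .
qed

lemma rconj_swap_side: "word_eq n (rconj k X) Y \<Longrightarrow> k < n \<Longrightarrow> word_eq n X (rconj k Y)"
proof -
  assume a: "word_eq n (rconj k X) Y" "k < n"
  have "valid_word n X" using word_eq_valid[OF a(1)] by simp
  have "word_eq n X (rconj k (rconj k X))"
    by (rule word_eq_sym, rule rconj_involutive) (use a \<open>valid_word n X\<close> in auto)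
  also have "word_eq n \<dots> (rconj k Y)" by (rule rconj_cong[OF a])
  finally show ?thesis .
qed

lemma rconj_commute:
  assumes "k < n" "m < n" "k \<noteq> m" "\<not> adj k m" "valid_word n X"
  shows "word_eq n (rconj k (rconj m X)) (rconj m (rconj k X))"
proof -
  have km: "word_eq n [R k, R m] [R m, R k]"
    by (rule word_eq_rel) (use assms in \<open>auto intro: BrRels.intros simp: valid_gen_def\<close>)
  have mk: "word_eq n [R m, R k] [R k, R m]"
    by (rule word_eq_rel) (use assms in \<open>auto intro!: BrRels.intros simp: valid_gen_def adj_def\<close>)
  have "word_eq n (rconj k (rconj m X)) (R m # R k # X @ [R m, R k])"
    by (rule word_eq_context[OF km, of "[]" "X @ [R m, R k]"])
      (use assms in \<open>auto simp: rconj_def valid_gen_def\<close>)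
  also have "word_eq n \<dots> (rconj m (rconj k X))"
    by (rule word_eq_context[OF mk, of "[R m, R k] @ X" "[]"])
      (use assms in \<open>auto simp: rconj_def valid_gen_def\<close>)
  finally show ?thesis .
qed

lemma rconj_braid:
  assumes "i < n" "j < n" "adj i j" "0 < i" "0 < j" "valid_word n X"
  shows "word_eq n (rconj i (rconj j (rconj i X))) (rconj j (rconj i (rconj j X)))"
proof -
  have braid: "word_eq n [R i, R j, R i] [R j, R i, R j]"
    by (rule word_eq_rel) (use assms in \<open>auto intro: BrRels.intros simp: valid_gen_def\<close>)
  have "word_eq n (rconj i (rconj j (rconj i X))) ([R j, R i, R j] @ X @ [R i, R j, R i])"
    by (rule word_eq_context[OF braid, of "[]" "X @ [R i, R j, R i]"])
      (use assms in \<open>auto simp: rconj_def valid_gen_def\<close>)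
  also have "word_eq n \<dots> (rconj j (rconj i (rconj j X)))"
    by (rule word_eq_context[OF braid, of "[R j, R i, R j] @ X" "[]"])
      (use assms in \<open>auto simp: rconj_def valid_gen_def\<close>)
  finally show ?thesis .
qed

lemma rconj_braid_01:
  assumes "1 < n" "valid_word n X"
  shows "word_eq n (rconj 0 (rconj 1 (rconj 0 (rconj 1 X)))) (rconj 1 (rconj 0 (rconj 1 (rconj 0 X))))"
proof -
  have braid: "word_eq n [R 1, R 0, R 1, R 0] [R 0, R 1, R 0, R 1]"
    using assms by (intro word_eq_rel BrRels.c1) (auto simp: valid_gen_def)
  have "word_eq n (rconj 0 (rconj 1 (rconj 0 (rconj 1 X))))
                  ([R 1, R 0, R 1, R 0] @ X @ [R 1, R 0, R 1, R 0])"
    by (rule word_eq_context[OF word_eq_sym[OF braid], of "[]" "X @ [R 1, R 0, R 1, R 0]"])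
      (use assms in \<open>auto simp: rconj_def valid_gen_def\<close>)
  also have "word_eq n \<dots> (rconj 1 (rconj 0 (rconj 1 (rconj 0 X))))"
    by (rule word_eq_context[OF braid, of "[R 1, R 0, R 1, R 0] @ X" "[]"])
      (use assms in \<open>auto simp: rconj_def valid_gen_def\<close>)
  finally show ?thesis .
qed

lemma rconj_e_self: "i < n \<Longrightarrow> word_eq n (rconj i [E i]) [E i]"
proof -
  assume a: "i < n"
  have re: "word_eq n [R i, E i] [E i]" and er: "word_eq n [E i, R i] [E i]"
    by (rule word_eq_rel; use a in \<open>auto intro: BrRels.intros simp: valid_gen_def\<close>)+
  have "word_eq n (rconj i [E i]) [E i, R i]"
    by (rule word_eq_context[OF re, of "[]" "[R i]"]) (use a in \<open>auto simp: rconj_def valid_gen_def\<close>)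
  also have "word_eq n \<dots> [E i]" by (rule er)
  finally show ?thesis .
qed

lemma rconj_e_commute:
  assumes "k < n" "m < n" "k \<noteq> m" "\<not> adj k m"
  shows "word_eq n (rconj k [E m]) [E m]"
proof -
  have re: "word_eq n [R k, E m] [E m, R k]"
    by (rule word_eq_sym, rule word_eq_rel)
      (use assms in \<open>auto intro!: BrRels.intros simp: valid_gen_def adj_def\<close>)
  have "word_eq n (rconj k [E m]) ([E m] @ [R k, R k])"
    by (rule word_eq_context[OF re, of "[]" "[R k]"]) (use assms in \<open>auto simp: rconj_def valid_gen_def\<close>)
  also have "word_eq n \<dots> [E m]"
    by (rule word_eq_context[OF r_square[OF assms(1)], of "[E m]" "[]"])
      (use assms in \<open>auto simp: valid_gen_def\<close>)
  finally show ?thesis .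
qed

text \<open>r_0 fixes r_1 e_0 r_1 (relation c4): the long root 2 f_2 is orthogonal to beta_0.\<close>

lemma rconj_r0_fixes_long2: "1 < n \<Longrightarrow> word_eq n (rconj 0 (rconj 1 [E 0])) (rconj 1 [E 0])"
proof -
  assume a: "1 < n"
  have c4: "word_eq n [R 1, R 0, R 1, E 0] [E 0, R 1, R 0, R 1]"
    using a by (intro word_eq_rel BrRels.c4) (auto simp: valid_gen_def)
  have "word_eq n (rconj 0 (rconj 1 [E 0])) ([R 1, R 1] @ rconj 0 (rconj 1 [E 0]))"
    by (rule word_eq_context[OF word_eq_sym[OF r_square[of 1]], where x="[]" and y="rconj 0 (rconj 1 [E 0])"])
      (use a in \<open>auto simp: rconj_def valid_gen_def\<close>)
  also have "word_eq n \<dots> ([R 1] @ [E 0, R 1, R 0, R 1] @ [R 1, R 0])"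
    by (rule word_eq_context[OF c4, of "[R 1]" "[R 1, R 0]"]) (use a in \<open>auto simp: rconj_def valid_gen_def\<close>)
  also have "word_eq n \<dots> ([R 1, E 0, R 1, R 0] @ [] @ [R 0])"
    by (rule word_eq_context[OF r_square, where x="[R 1, E 0, R 1, R 0]" and y="[R 0]"])
      (use a in \<open>auto simp: valid_gen_def\<close>)
  also have "word_eq n \<dots> ([R 1, E 0, R 1] @ [] @ [])"
    by (rule word_eq_context[OF r_square, where x="[R 1, E 0, R 1]" and y="[]"])
      (use a in \<open>auto simp: valid_gen_def\<close>)
  finally show ?thesis by (simp add: rconj_def)
qed

text \<open>r_a r_{a+1} e_a r_{a+1} r_a = e_{a+1} for 0 < a (braid relation r_i e_j r_i = r_j e_i r_j).\<close>

lemma rconj_e_shift: "0 < a \<Longrightarrow> a + 1 < n \<Longrightarrow> word_eq n (rconj a (rconj (a+1) [E a])) [E (a+1)]"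
proof -
  assume a: "0 < a" "a + 1 < n"
  have rer: "word_eq n (rconj (a+1) [E a]) (rconj a [E (a+1)])" unfolding rconj_def
    by (rule word_eq_rel) (use a in \<open>auto intro!: BrRels.intros simp: valid_gen_def adj_def\<close>)
  have "word_eq n (rconj a (rconj (a+1) [E a])) (rconj a (rconj a [E (a+1)]))"
    by (rule rconj_cong[OF rer]) (use a in auto)
  also have "word_eq n \<dots> [E (a+1)]" by (rule rconj_involutive) (use a in \<open>auto simp: valid_gen_def\<close>)
  finally show ?thesis .
qed

text \<open>r_1 fixes r_0 e_1 r_0 (relations c2, c7): the root f_1 + f_2 is orthogonal to beta_1.\<close>

lemma rconj_r1_fixes_sum12: "1 < n \<Longrightarrow> word_eq n (rconj 1 (rconj 0 [E 1])) (rconj 0 [E 1])"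
proof -
  assume a: "1 < n"
  have c2: "word_eq n [R 1, R 0, E 1] [R 0, E 1]" and c7: "word_eq n [E 1, R 0, R 1] [E 1, R 0]"
    using a by (intro word_eq_rel BrRels.c2 BrRels.c7; auto simp: valid_gen_def)+
  have "word_eq n (rconj 1 (rconj 0 [E 1])) ([R 0, E 1] @ [R 0, R 1])"
    by (rule word_eq_context[OF c2, of "[]" "[R 0, R 1]"]) (use a in \<open>auto simp: rconj_def valid_gen_def\<close>)
  also have "word_eq n \<dots> ([R 0] @ [E 1, R 0] @ [])"
    by (rule word_eq_context[OF c7, of "[R 0]" "[]"]) (use a in \<open>auto simp: rconj_def valid_gen_def\<close>)
  finally show ?thesis by (simp add: rconj_def)
qed

section \<open>Words attached to the positive roots\<close>

text \<open>e_long a stands for the long root 2 f_a: it is e_0 for a = 1 and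
  r_{a-1} (e_long (a-1)) r_{a-1} afterwards, as r_{a-1} swaps f_{a-1} and f_a.\<close>

fun e_long :: "nat \<Rightarrow> gen list" where
  "e_long 0 = [E 0]"
| "e_long (Suc 0) = [E 0]"
| "e_long (Suc (Suc a)) = rconj (Suc a) (e_long (Suc a))"

text \<open>e_diff a b stands for f_b - f_a (a < b): it is e_a = e_{beta_a} for b = a + 1,
  and is moved to larger b by conjugation with r_b.\<close>

primrec e_diff :: "nat \<Rightarrow> nat \<Rightarrow> gen list" where
  "e_diff a 0 = [E a]"
| "e_diff a (Suc b) = (if b \<le> a then [E a] else rconj b (e_diff a b))"

text \<open>e_sum a b stands for f_a + f_b (a < b): r_0 turns f_b - f_1 into f_b + f_1,
  and conjugation with r_a moves the smaller index from a to a + 1.\<close>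

primrec e_sum :: "nat \<Rightarrow> nat \<Rightarrow> gen list" where
  "e_sum 0 b = rconj 0 (e_diff 1 b)"
| "e_sum (Suc a) b = (if a = 0 then rconj 0 (e_diff 1 b) else rconj a (e_sum a b))"

lemma e_long_step: "1 \<le> a \<Longrightarrow> e_long (Suc a) = rconj a (e_long a)"
  by (cases a) auto

lemma e_sum_step: "1 \<le> a \<Longrightarrow> e_sum (Suc a) b = rconj a (e_sum a b)"
  by simp

lemma valid_e_long: "0 < n \<Longrightarrow> a \<le> n \<Longrightarrow> valid_word n (e_long a)"
  by (induction a rule: e_long.induct) (auto simp: valid_gen_def)

lemma valid_e_diff: "a < n \<Longrightarrow> b \<le> n \<Longrightarrow> valid_word n (e_diff a b)"
  by (induction b) (auto simp: valid_gen_def)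

lemma valid_e_sum: "1 < n \<Longrightarrow> b \<le> n \<Longrightarrow> a \<le> n \<Longrightarrow> valid_word n (e_sum a b)"
  by (induction a) (auto simp: valid_e_diff)

subsection \<open>Long roots\<close>

text \<open>r_k fixes 2 f_a (up to sign) unless k \<in> {a - 1, a} with k > 0.\<close>

lemma e_long_fixed:
  "1 \<le> a \<Longrightarrow> a \<le> n \<Longrightarrow> k < n \<Longrightarrow> k \<noteq> a \<Longrightarrow> k \<noteq> a - 1 \<or> k = 0
   \<Longrightarrow> word_eq n (rconj k (e_long a)) (e_long a)"
proof (induction a arbitrary: k rule: less_induct)
  case (less a)
  note h = less.prems
  consider "a = 1" | "a = 2" | m where "a = m + 3"
  proof -
    have "a = 1 \<or> a = 2 \<or> a \<ge> 3" using h(1) by arith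
    then show ?thesis using that(1) that(2) that(3)[of "a - 3"] by auto
  qed
  then show ?case
  proof cases
    case 1
    then show ?thesis
      using h by (cases "k = 0") (simp_all add: rconj_e_self rconj_e_commute adj_def)
  next
    case 2
    have long2: "e_long a = rconj 1 [E 0]" using 2 by (simp add: numeral_2_eq_2)
    show ?thesis
    proof (cases "k = 0")
      case True
      then show ?thesis using rconj_r0_fixes_long2[of n] h 2 long2 by simp
    next
      case False
      have "word_eq n (rconj k (rconj 1 [E 0])) (rconj 1 (rconj k [E 0]))"
        using False h 2 by (intro rconj_commute) (auto simp: adj_def valid_gen_def)
      also have "word_eq n \<dots> (rconj 1 [E 0])"
        using False h 2 by (intro rconj_cong rconj_e_commute) (auto simp: adj_def)
      finally show ?thesis using long2 by simp
    qed
  next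
    case 3
    have unfold1: "e_long (m+2) = rconj (m+1) (e_long (m+1))" by simp
    have unfold2: "e_long a = rconj (m+2) (e_long (m+2))" using 3 by (simp add: numeral_3_eq_3)
    have valid: "valid_word n (e_long (m+1))" "valid_word n (e_long (m+2))"
      using h 3 by (auto intro: valid_e_long)
    show ?thesis
    proof (cases "k = m + 1")
      case True
      have "word_eq n (rconj k (e_long a)) (rconj (m+2) (rconj (m+1) (rconj (m+2) (e_long (m+1)))))"
        unfolding unfold2 unfold1 True using h 3 valid by (intro rconj_braid) (auto simp: adj_def)
      also have "word_eq n \<dots> (rconj (m+2) (rconj (m+1) (e_long (m+1))))"
        using less.IH[of "m+1" "m+2"] h 3 by (intro rconj_cong) auto
      finally show ?thesis using unfold1 unfold2 by simp
    next
      case False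
      have "word_eq n (rconj k (e_long a)) (rconj (m+2) (rconj k (e_long (m+2))))"
        unfolding unfold2 using h 3 valid False by (intro rconj_commute) (auto simp: adj_def)
      also have "word_eq n \<dots> (rconj (m+2) (e_long (m+2)))"
        using less.IH[of "m+2" k] h 3 False by (intro rconj_cong) auto
      finally show ?thesis using unfold2 by simp
    qed
  qed
qed

subsection \<open>Short roots f_b - f_a\<close>

lemma e_diff_fixed:
  "1 \<le> a \<Longrightarrow> a < b \<Longrightarrow> b \<le> n \<Longrightarrow> k < n \<Longrightarrow> k \<noteq> a - 1 \<Longrightarrow> k \<noteq> a \<Longrightarrow> k \<noteq> b - 1 \<Longrightarrow> k \<noteq> b
   \<Longrightarrow> word_eq n (rconj k (e_diff a b)) (e_diff a b)"
proof (induction b arbitrary: k rule: less_induct)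
  case (less b)
  note h = less.prems
  consider "b = Suc a" | c where "b = Suc (Suc c)" "a \<le> c"
  proof -
    have "b = Suc a \<or> b \<ge> a + 2" using h(2) by arith
    then show ?thesis using that(1) that(2)[of "b - 2"] by auto
  qed
  then show ?case
  proof cases
    case 1
    then show ?thesis using h by (simp add: rconj_e_commute adj_def)
  next
    case 2
    have unfold: "e_diff a b = rconj (Suc c) (e_diff a (Suc c))" using 2 by simp
    have valid: "valid_word n (e_diff a (Suc c))" using h 2 by (intro valid_e_diff) auto
    show ?thesis
    proof (cases "k = c")
      case True
      have unfold': "e_diff a (Suc c) = rconj c (e_diff a c)" using True h 2 by simp
      have valid': "valid_word n (e_diff a c)" using h 2 by (intro valid_e_diff) auto
      have "word_eq n (rconj k (e_diff a b)) (rconj (Suc c) (rconj c (rconj (Suc c) (e_diff a c))))"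
        unfolding unfold unfold' True using h 2 valid' True by (intro rconj_braid) (auto simp: adj_def)
      also have "word_eq n \<dots> (rconj (Suc c) (rconj c (e_diff a c)))"
        using less.IH[of c "Suc c"] h 2 True by (intro rconj_cong) auto
      finally show ?thesis using unfold unfold' by simp
    next
      case False
      have "word_eq n (rconj k (e_diff a b)) (rconj (Suc c) (rconj k (e_diff a (Suc c))))"
        unfolding unfold using h 2 valid False by (intro rconj_commute) (auto simp: adj_def)
      also have "word_eq n \<dots> (rconj (Suc c) (e_diff a (Suc c)))"
        using less.IH[of "Suc c" k] h 2 False by (intro rconj_cong) auto
      finally show ?thesis using unfold by simp
    qed
  qed
qed

lemma e_diff_raise_lower:
  "1 \<le> a \<Longrightarrow> a + 1 < b \<Longrightarrow> b \<le> n \<Longrightarrow> word_eq n (rconj a (e_diff a b)) (e_diff (a+1) b)"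
proof (induction b)
  case 0 then show ?case by simp
next
  case (Suc b)
  show ?case
  proof (cases "b = a + 1")
    case True
    have "e_diff a (Suc b) = rconj (a+1) [E a]" "e_diff (a+1) (Suc b) = [E (a+1)]" using True by auto
    then show ?thesis using rconj_e_shift[of a n] Suc.prems True by simp
  next
    case False
    have "word_eq n (rconj a (e_diff a (Suc b))) (rconj b (rconj a (e_diff a b)))"
      using Suc.prems False by (simp, intro rconj_commute) (auto simp: adj_def valid_e_diff)
    also have "word_eq n \<dots> (rconj b (e_diff (a+1) b))"
      using Suc.prems Suc.IH False by (intro rconj_cong) auto
    finally show ?thesis using Suc.prems False by simp
  qed
qed

lemma e_diff_lower_lower:
  assumes "2 \<le> a" "a < b" "b \<le> n"
  shows "word_eq n (rconj (a-1) (e_diff a b)) (e_diff (a-1) b)"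
proof -
  have "word_eq n (rconj (a-1) (e_diff (a-1) b)) (e_diff a b)"
    using e_diff_raise_lower[of "a-1" b n] assms by simp
  then have "word_eq n (e_diff (a-1) b) (rconj (a-1) (e_diff a b))"
    by (rule rconj_swap_side) (use assms in auto)
  then show ?thesis by (rule word_eq_sym)
qed

lemma e_diff_lower_upper:
  assumes "a + 1 < b" "b \<le> n"
  shows "word_eq n (rconj (b-1) (e_diff a b)) (e_diff a (b-1))"
proof -
  obtain c where c: "b = Suc c" using assms by (cases b) auto
  have "e_diff a b = rconj c (e_diff a c)" using c assms by simp
  then show ?thesis using c assms by (simp, intro rconj_involutive) (auto intro: valid_e_diff)
qed

subsection \<open>Short roots f_a + f_b\<close>

lemma e_sum_raise_upper:
  "1 \<le> a \<Longrightarrow> a < b \<Longrightarrow> b < n \<Longrightarrow> word_eq n (rconj b (e_sum a b)) (e_sum a (b+1))"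
proof (induction a rule: nat_induct_at_least)
  case base
  have "word_eq n (rconj b (rconj 0 (e_diff 1 b))) (rconj 0 (rconj b (e_diff 1 b)))"
    using base by (intro rconj_commute) (auto simp: adj_def valid_e_diff)
  then show ?case using base by simp
next
  case (Suc a)
  have "word_eq n (rconj b (rconj a (e_sum a b))) (rconj a (rconj b (e_sum a b)))"
    using Suc by (intro rconj_commute) (auto simp: adj_def valid_e_sum)
  also have "word_eq n \<dots> (rconj a (e_sum a (b+1)))"
    using Suc by (intro rconj_cong) auto
  finally show ?case using Suc by simp
qed

lemma e_sum_lower_upper:
  assumes "1 \<le> a" "a + 1 < b" "b \<le> n"
  shows "word_eq n (rconj (b-1) (e_sum a b)) (e_sum a (b-1))"
proof -
  have "word_eq n (rconj (b-1) (e_sum a (b-1))) (e_sum a b)"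
    using e_sum_raise_upper[of a "b-1" n] assms by simp
  then have "word_eq n (e_sum a (b-1)) (rconj (b-1) (e_sum a b))"
    by (rule rconj_swap_side) (use assms in auto)
  then show ?thesis by (rule word_eq_sym)
qed

text \<open>r_0 fixes f_2 + f_b (b > 2); this is where the braid relation
  r_1 r_0 r_1 r_0 = r_0 r_1 r_0 r_1 enters.\<close>

lemma e_sum2_fixed_r0:
  assumes "2 < b" "b \<le> n"
  shows "word_eq n (rconj 0 (e_sum 2 b)) (e_sum 2 b)"
proof -
  have n1: "1 < n" using assms by simp
  have raise: "word_eq n (rconj 1 (e_diff 1 b)) (e_diff 2 b)"
    using e_diff_raise_lower[of 1 b n] assms by (simp add: numeral_2_eq_2)
  have diff1: "word_eq n (e_diff 1 b) (rconj 1 (e_diff 2 b))"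
    using n1 by (intro rconj_swap_side[OF raise])
  have fixed: "word_eq n (rconj 0 (e_diff 2 b)) (e_diff 2 b)"
    using assms by (intro e_diff_fixed) auto
  have valid: "valid_word n (e_diff 2 b)" using assms by (intro valid_e_diff) auto
  have "word_eq n (rconj 0 (rconj 1 (rconj 0 (e_diff 1 b))))
                  (rconj 0 (rconj 1 (rconj 0 (rconj 1 (e_diff 2 b)))))"
    using diff1 n1 by (intro rconj_cong) auto
  also have "word_eq n \<dots> (rconj 1 (rconj 0 (rconj 1 (rconj 0 (e_diff 2 b)))))"
    using n1 valid by (intro rconj_braid_01)
  also have "word_eq n \<dots> (rconj 1 (rconj 0 (rconj 1 (e_diff 2 b))))"
    using fixed n1 by (intro rconj_cong) auto
  also have "word_eq n \<dots> (rconj 1 (rconj 0 (e_diff 1 b)))"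
    using word_eq_sym[OF diff1] n1 by (intro rconj_cong) auto
  finally show ?thesis by (simp add: numeral_2_eq_2)
qed

lemma e_sum_fixed:
  "1 \<le> a \<Longrightarrow> a < b \<Longrightarrow> b \<le> n \<Longrightarrow> k < n \<Longrightarrow> k \<noteq> a - 1 \<Longrightarrow> k \<noteq> a \<Longrightarrow> k \<noteq> b - 1 \<Longrightarrow> k \<noteq> b
   \<Longrightarrow> word_eq n (rconj k (e_sum a b)) (e_sum a b)"
proof (induction a arbitrary: k rule: less_induct)
  case (less a)
  note h = less.prems
  consider "a = 1" | "a = 2" | m where "a = m + 3"
  proof -
    have "a = 1 \<or> a = 2 \<or> a \<ge> 3" using h(1) by arith
    then show ?thesis using that(1) that(2) that(3)[of "a - 3"] by auto
  qed
  then show ?case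
  proof cases
    case 1
    have "word_eq n (rconj k (rconj 0 (e_diff 1 b))) (rconj 0 (rconj k (e_diff 1 b)))"
      using h 1 by (intro rconj_commute) (auto simp: adj_def valid_e_diff)
    also have "word_eq n \<dots> (rconj 0 (e_diff 1 b))"
      using h 1 by (intro rconj_cong e_diff_fixed) auto
    finally show ?thesis using 1 by simp
  next
    case 2
    show ?thesis
    proof (cases "k = 0")
      case True
      then show ?thesis using e_sum2_fixed_r0[of b n] h 2 by simp
    next
      case False
      have "word_eq n (rconj k (rconj 1 (e_sum 1 b))) (rconj 1 (rconj k (e_sum 1 b)))"
        using h 2 False by (intro rconj_commute) (auto simp: adj_def valid_e_sum valid_e_diff)
      also have "word_eq n \<dots> (rconj 1 (e_sum 1 b))"
        using less.IH[of 1 k] h 2 False by (intro rconj_cong) auto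
      finally show ?thesis using 2 by (simp add: numeral_2_eq_2)
    qed
  next
    case 3
    have unfold1: "e_sum (m+2) b = rconj (m+1) (e_sum (m+1) b)" by simp
    have unfold2: "e_sum a b = rconj (m+2) (e_sum (m+2) b)" using 3 by (simp add: numeral_3_eq_3)
    have valid: "valid_word n (e_sum (m+1) b)" "valid_word n (e_sum (m+2) b)"
      using h 3 valid_e_sum[of n b "m+1"] valid_e_sum[of n b "m+2"] by auto
    show ?thesis
    proof (cases "k = m + 1")
      case True
      have "word_eq n (rconj k (e_sum a b)) (rconj (m+2) (rconj (m+1) (rconj (m+2) (e_sum (m+1) b))))"
        unfolding unfold2 unfold1 True using h 3 valid by (intro rconj_braid) (auto simp: adj_def)
      also have "word_eq n \<dots> (rconj (m+2) (rconj (m+1) (e_sum (m+1) b)))"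
        using less.IH[of "m+1" "m+2"] h 3 by (intro rconj_cong) auto
      finally show ?thesis using unfold1 unfold2 by simp
    next
      case False
      have "word_eq n (rconj k (e_sum a b)) (rconj (m+2) (rconj k (e_sum (m+2) b)))"
        unfolding unfold2 using h 3 valid False by (intro rconj_commute) (auto simp: adj_def)
      also have "word_eq n \<dots> (rconj (m+2) (e_sum (m+2) b))"
        using less.IH[of "m+2" k] h 3 False by (intro rconj_cong) auto
      finally show ?thesis using unfold2 by simp
    qed
  qed
qed

text \<open>r_a fixes f_a + f_{a+1}, which is orthogonal to beta_a.\<close>

lemma e_sum_adjacent_fixed:
  "1 \<le> a \<Longrightarrow> a + 1 \<le> n \<Longrightarrow> word_eq n (rconj a (e_sum a (a+1))) (e_sum a (a+1))"
proof (induction a rule: nat_induct_at_least)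
  case base
  then show ?case using rconj_r1_fixes_sum12[of n] by (simp add: numeral_2_eq_2)
next
  case (Suc a)
  define X where "X = e_sum a (a+1)"
  have valid: "valid_word n X" unfolding X_def using Suc by (intro valid_e_sum) auto
  have raise: "word_eq n (rconj (a+1) X) (e_sum a (a+2))"
    unfolding X_def using e_sum_raise_upper[of a "a+1" n] Suc by auto
  have "word_eq n (rconj (a+1) (e_sum (Suc a) (Suc a + 1))) (rconj (a+1) (rconj a (rconj (a+1) X)))"
    using word_eq_sym[OF raise] Suc by (simp, intro rconj_cong) auto
  also have "word_eq n \<dots> (rconj a (rconj (a+1) (rconj a X)))"
    using Suc valid by (intro rconj_braid) (auto simp: adj_def)
  also have "word_eq n \<dots> (rconj a (rconj (a+1) X))"
    using Suc X_def by (intro rconj_cong) auto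
  also have "word_eq n \<dots> (e_sum (Suc a) (Suc a + 1))"
    using raise Suc by (simp, intro rconj_cong) auto
  finally show ?case by simp
qed
section \<open>Positive roots and equivariance of their words\<close>

text \<open>LongR a is 2 f_a, DiffR a b is f_b - f_a and SumR a b is f_a + f_b.\<close>

datatype root = LongR nat | DiffR nat nat | SumR nat nat

fun root_ok :: "nat \<Rightarrow> root \<Rightarrow> bool" where
  "root_ok n (LongR a) = (1 \<le> a \<and> a \<le> n)"
| "root_ok n (DiffR a b) = (1 \<le> a \<and> a < b \<and> b \<le> n)"
| "root_ok n (SumR a b) = (1 \<le> a \<and> a < b \<and> b \<le> n)"

fun root_word :: "root \<Rightarrow> gen list" where
  "root_word (LongR a) = e_long a"
| "root_word (DiffR a b) = e_diff a b"
| "root_word (SumR a b) = e_sum a b"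

text \<open>For k > 0 the reflection in beta_k swaps the coordinates k and k + 1.\<close>

definition swap_adj :: "nat \<Rightarrow> nat \<Rightarrow> nat" where
  "swap_adj k a = (if a = k then k + 1 else if a = k + 1 then k else a)"

text \<open>The positive root among +-s_{beta_k} r; s_{beta_0} negates the first coordinate.\<close>

fun root_refl :: "nat \<Rightarrow> root \<Rightarrow> root" where
  "root_refl k (LongR a) = (if k = 0 then LongR a else LongR (swap_adj k a))"
| "root_refl k (DiffR a b) = (if k = 0 then (if a = 1 then SumR 1 b else DiffR a b)
     else DiffR (min (swap_adj k a) (swap_adj k b)) (max (swap_adj k a) (swap_adj k b)))"
| "root_refl k (SumR a b) = (if k = 0 then (if a = 1 then DiffR 1 b else SumR a b)
     else SumR (min (swap_adj k a) (swap_adj k b)) (max (swap_adj k a) (swap_adj k b)))"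

lemma rconj_root_word_long:
  assumes "root_ok n (LongR a)" "k < n"
  shows "word_eq n (rconj k (root_word (LongR a))) (root_word (root_refl k (LongR a)))
         \<and> root_ok n (root_refl k (LongR a))"
proof -
  have a: "1 \<le> a" "a \<le> n" and n0: "0 < n" using assms by auto
  consider "k = 0" | "k \<noteq> 0" "k = a" | "k \<noteq> 0" "k + 1 = a" | "k \<noteq> 0" "k \<noteq> a" "k + 1 \<noteq> a" by auto
  then show ?thesis
  proof cases
    case 1 then show ?thesis using assms a e_long_fixed[of a n k] by simp
  next
    case 2
    have "e_long (Suc a) = rconj a (e_long a)" using a by (simp add: e_long_step)
    then show ?thesis using 2 assms a n0 by (auto simp: swap_adj_def intro!: word_eq_refl valid_e_long)
  next
    case 3
    have "e_long a = rconj k (e_long k)" using 3 by (simp add: e_long_step[symmetric])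
    then show ?thesis using 3 assms a n0 by (auto simp: swap_adj_def intro!: rconj_involutive valid_e_long)
  next
    case 4
    have "swap_adj k a = a" using 4 by (auto simp: swap_adj_def)
    then show ?thesis using 4 assms a e_long_fixed[of a n k] by simp
  qed
qed

lemma rconj_root_word_diff:
  assumes "root_ok n (DiffR a b)" "k < n"
  shows "word_eq n (rconj k (root_word (DiffR a b))) (root_word (root_refl k (DiffR a b)))
         \<and> root_ok n (root_refl k (DiffR a b))"
proof -
  have ab: "1 \<le> a" "a < b" "b \<le> n" using assms by auto
  consider "k = 0" "a = 1" | "k \<noteq> 0" "k + 1 = a" | "k = a" "b = a + 1" | "k = a" "b \<noteq> a + 1"
    | "k \<noteq> a" "k + 1 = b" | "k = b" | "k \<noteq> a - 1" "k \<noteq> a" "k \<noteq> b - 1" "k \<noteq> b" by arith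
  then show ?thesis
  proof cases
    case 1 then show ?thesis using assms ab by (auto intro!: word_eq_refl valid_e_diff)
  next
    case 2
    then have "root_refl k (DiffR a b) = DiffR k b" using ab by (auto simp: swap_adj_def)
    then show ?thesis using 2 assms ab e_diff_lower_lower[of a b n] by (auto simp del: root_refl.simps)
  next
    case 3
    then have "root_refl k (DiffR a b) = DiffR a b" using ab by (auto simp: swap_adj_def)
    then show ?thesis using 3 assms ab rconj_e_self[of a n] by (auto simp del: root_refl.simps)
  next
    case 4
    then have "root_refl k (DiffR a b) = DiffR (a+1) b" using ab by (auto simp: swap_adj_def)
    then show ?thesis using 4 assms ab e_diff_raise_lower[of a b n] by (auto simp del: root_refl.simps)
  next
    case 5
    then have "root_refl k (DiffR a b) = DiffR a k" using ab by (auto simp: swap_adj_def)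
    then show ?thesis using 5 assms ab e_diff_lower_upper[of a b n] by (auto simp del: root_refl.simps)
  next
    case 6
    then have "root_refl k (DiffR a b) = DiffR a (b+1)" using ab by (auto simp: swap_adj_def)
    then show ?thesis using 6 assms ab by (auto intro!: word_eq_refl valid_e_diff)
  next
    case 7
    then have "root_refl k (DiffR a b) = DiffR a b" using ab by (auto simp: swap_adj_def)
    then show ?thesis using 7 assms ab e_diff_fixed[of a b n k] by (auto simp del: root_refl.simps)
  qed
qed

lemma rconj_root_word_sum:
  assumes "root_ok n (SumR a b)" "k < n"
  shows "word_eq n (rconj k (root_word (SumR a b))) (root_word (root_refl k (SumR a b)))
         \<and> root_ok n (root_refl k (SumR a b))"
proof -
  have ab: "1 \<le> a" "a < b" "b \<le> n" using assms by auto
  consider "k = 0" "a = 1" | "k \<noteq> 0" "k + 1 = a" | "k = a" "b = a + 1" | "k = a" "b \<noteq> a + 1"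
    | "k \<noteq> a" "k + 1 = b" | "k = b" | "k \<noteq> a - 1" "k \<noteq> a" "k \<noteq> b - 1" "k \<noteq> b" by arith
  then show ?thesis
  proof cases
    case 1 then show ?thesis using assms ab by (auto intro!: rconj_involutive valid_e_diff)
  next
    case 2
    then have "root_refl k (SumR a b) = SumR k b" using ab by (auto simp: swap_adj_def)
    moreover have "e_sum a b = rconj k (e_sum k b)" using 2 by (auto simp: e_sum_step[symmetric])
    ultimately show ?thesis using 2 assms ab by (auto intro!: rconj_involutive valid_e_sum)
  next
    case 3
    then have "root_refl k (SumR a b) = SumR a b" using ab by (auto simp: swap_adj_def)
    then show ?thesis using 3 assms ab e_sum_adjacent_fixed[of a n] by (auto simp del: root_refl.simps)
  next
    case 4
    then have "root_refl k (SumR a b) = SumR (a+1) b" using ab by (auto simp: swap_adj_def)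
    then show ?thesis using 4 assms ab by (auto intro!: word_eq_refl valid_e_sum)
  next
    case 5
    then have "root_refl k (SumR a b) = SumR a k" using ab by (auto simp: swap_adj_def)
    then show ?thesis using 5 assms ab e_sum_lower_upper[of a b n] by (auto simp del: root_refl.simps)
  next
    case 6
    then have "root_refl k (SumR a b) = SumR a (b+1)" using ab by (auto simp: swap_adj_def)
    then show ?thesis using 6 assms ab e_sum_raise_upper[of a b n] by (auto simp del: root_refl.simps)
  next
    case 7
    then have "root_refl k (SumR a b) = SumR a b" using ab by (auto simp: swap_adj_def)
    then show ?thesis using 7 assms ab e_sum_fixed[of a b n k] by (auto simp del: root_refl.simps)
  qed
qed

lemma rconj_root_word:
  "root_ok n r \<Longrightarrow> k < n \<Longrightarrow>
   word_eq n (rconj k (root_word r)) (root_word (root_refl k r)) \<and> root_ok n (root_refl k r)"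
  by (cases r) (simp_all only: rconj_root_word_long rconj_root_word_diff rconj_root_word_sum)

section \<open>Reflections acting on root vectors\<close>

fun root_vec :: "root \<Rightarrow> nat \<Rightarrow> real" where
  "root_vec (LongR a) = (\<lambda>m. if m = a then 2 else 0)"
| "root_vec (DiffR a b) = (\<lambda>m. if m = b then 1 else if m = a then -1 else 0)"
| "root_vec (SumR a b) = (\<lambda>m. if m = a \<or> m = b then 1 else 0)"

lemma refl_beta_short:
  assumes "1 \<le> k" "k + 1 \<le> n"
  shows "refl_vec n (beta k) x = (\<lambda>m. if m = k then x (k+1) else if m = k + 1 then x k else x m)"
proof -
  have b: "beta k = (\<lambda>m. (if m = k + 1 then 1 else 0) - (if m = k then 1 else 0))"
    using assms by (auto simp: beta_def fun_eq_iff)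
  have inner_x: "inner_n n x (beta k) = x (k+1) - x k"
    unfolding inner_n_def b using assms
    by (simp add: right_diff_distrib sum_subtractf if_distrib[of "\<lambda>t. x _ * t"] sum.delta cong: if_cong)
  have sq: "\<And>m. beta k m * beta k m = (if m = k + 1 then 1 else 0) + (if m = k then 1 else 0)"
    using assms by (auto simp: beta_def)
  have inner_b: "inner_n n (beta k) (beta k) = 2"
    unfolding inner_n_def using assms by (simp add: sq sum.distrib)
  show ?thesis unfolding refl_vec_def inner_x inner_b using assms by (auto simp: fun_eq_iff b field_simps)
qed

lemma refl_beta_long:
  assumes "1 \<le> n"
  shows "refl_vec n (beta 0) x = (\<lambda>m. if m = 1 then - x 1 else x m)"
proof -
  have b: "beta 0 = (\<lambda>m. 2 * (if m = 1 then 1 else 0))"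
    by (auto simp: beta_def fun_eq_iff)
  have inner_x: "inner_n n x (beta 0) = 2 * x 1"
    unfolding inner_n_def b using assms
    by (simp add: if_distrib[of "\<lambda>t. x _ * (2 * t)"] sum.delta cong: if_cong)
  have inner_b: "inner_n n (beta 0) (beta 0) = 4"
    unfolding inner_n_def b using assms
    by (simp add: if_distrib sum.delta cong: if_cong)
  show ?thesis unfolding refl_vec_def inner_x inner_b using assms by (auto simp: fun_eq_iff b field_simps)
qed

text \<open>The sign with which s_{beta_k} maps root_vec r to root_vec (root_refl k r).\<close>

fun refl_sign :: "nat \<Rightarrow> root \<Rightarrow> real" where
  "refl_sign k (LongR a) = (if k = 0 \<and> a = 1 then -1 else 1)"
| "refl_sign k (DiffR a b) = (if k \<noteq> 0 \<and> swap_adj k b < swap_adj k a then -1 else 1)"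
| "refl_sign k (SumR a b) = 1"

lemma refl_sign_unit: "refl_sign k r = 1 \<or> refl_sign k r = -1"
  by (cases r) auto

lemma refl_root_vec:
  assumes "root_ok n r" "k < n"
  shows "refl_vec n (beta k) (\<lambda>m. s * root_vec r m) = (\<lambda>m. (s * refl_sign k r) * root_vec (root_refl k r) m)"
proof (cases "k = 0")
  case True
  then show ?thesis using assms by (cases r) (auto simp: refl_beta_long fun_eq_iff)
next
  case False
  then show ?thesis using assms
    by (cases r) (auto simp: refl_beta_short fun_eq_iff swap_adj_def min_def max_def)
qed

section \<open>Conjugating e_i by a Weyl group element\<close>

lemma word_act_Cons: "word_act n (a # ws) x = refl_vec n (beta a) (word_act n ws x)"
  by (simp add: word_act_def)

lemma conj_e_root_word:
  assumes "2 \<le> n" "i < n" "set ws \<subseteq> {..<n}"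
  shows "\<exists>r s. root_ok n r \<and> (s = 1 \<or> s = -1) \<and> word_act n ws (beta i) = (\<lambda>m. s * root_vec r m)
           \<and> word_eq n (map R ws @ [E i] @ map R (rev ws)) (root_word r)"
  using assms(3)
proof (induction ws)
  case Nil
  define r where "r = (if i = 0 then LongR 1 else DiffR i (i+1))"
  have "root_ok n r" using assms by (auto simp: r_def)
  moreover have "word_act n [] (beta i) = (\<lambda>m. 1 * root_vec r m)"
    by (auto simp: word_act_def r_def beta_def fun_eq_iff)
  moreover have "word_eq n (map R [] @ [E i] @ map R (rev [])) (root_word r)"
    using assms by (auto simp: r_def valid_gen_def intro!: word_eq_refl)
  ultimately show ?case by blast
next
  case (Cons a ws)
  then obtain r s where IH: "root_ok n r" "s = 1 \<or> s = -1" "word_act n ws (beta i) = (\<lambda>m. s * root_vec r m)"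
     "word_eq n (map R ws @ [E i] @ map R (rev ws)) (root_word r)" by auto
  have a: "a < n" using Cons.prems by auto
  have vec: "word_act n (a # ws) (beta i) = (\<lambda>m. (s * refl_sign a r) * root_vec (root_refl a r) m)"
    using refl_root_vec[OF IH(1) a] IH(3) by (simp add: word_act_Cons)
  have "map R (a # ws) @ [E i] @ map R (rev (a # ws)) = rconj a (map R ws @ [E i] @ map R (rev ws))"
    by (simp add: rconj_def)
  then have "word_eq n (map R (a # ws) @ [E i] @ map R (rev (a # ws))) (rconj a (root_word r))"
    using rconj_cong[OF IH(4) a] by simp
  also have "word_eq n \<dots> (root_word (root_refl a r))" using rconj_root_word[OF IH(1) a] by simp
  finally have word: "word_eq n (map R (a # ws) @ [E i] @ map R (rev (a # ws))) (root_word (root_refl a r))" .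
  have "s * refl_sign a r = 1 \<or> s * refl_sign a r = -1" using IH(2) refl_sign_unit[of a r] by auto
  then show ?case using vec word rconj_root_word[OF IH(1) a] by blast
qed

text \<open>The only root vectors equal to +-beta_j are those of the root beta_j itself,
  whose root word is the single letter e_j.\<close>

lemma root_word_of_beta:
  assumes "root_ok n r" "s = 1 \<or> s = -1" "beta j = (\<lambda>m. s * root_vec r m)"
  shows "root_word r = [E j]"
proof -
  have coord: "\<And>m. beta j m = s * root_vec r m" using assms(3) by metis
  show ?thesis
  proof (cases r)
    case (LongR a)
    have "beta j a = s * 2" "beta j 1 = s * root_vec r 1" using coord[of a] coord[of 1] LongR by auto
    then show ?thesis using assms(1,2) LongR by (auto simp: beta_def split: if_splits)
  next
    case (DiffR a b)
    have "beta j a = - s" "beta j b = s" using coord[of a] coord[of b] DiffR assms by auto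
    then show ?thesis using assms(1,2) DiffR by (auto simp: beta_def split: if_splits)
  next
    case (SumR a b)
    have "beta j a = s" "beta j b = s" using coord[of a] coord[of b] SumR assms by auto
    then show ?thesis using assms(1,2) SumR by (auto simp: beta_def split: if_splits)
  qed
qed

theorem mainTheorem10:
  fixes n i j :: nat and ws :: "nat list"
  assumes "2 \<le> n" and "i < n" and "j < n"
    and "set ws \<subseteq> {..<n}"
    and "word_act n ws (beta i) = beta j"
  shows "br_eq n (mono 0 (map R ws @ [E i] @ map R (rev ws))) (mono 0 [E j])"
proof -
  obtain r s where r: "root_ok n r" "s = 1 \<or> s = -1"
      "word_act n ws (beta i) = (\<lambda>m. s * root_vec r m)"
      "word_eq n (map R ws @ [E i] @ map R (rev ws)) (root_word r)"
    using conj_e_root_word[OF assms(1,2,4)] by blast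
  have "root_word r = [E j]" using root_word_of_beta[OF r(1,2)] r(3) assms(5) by simp
  then show ?thesis using r(4) unfolding word_eq_def by simp
qed

end
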